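(* Consider the following two-player game with parameters $N\ge 1$ (number of bins), a positive integer $b\ge 1$, and thresholds $k>k'\ge 0$. Initially there are $N$ bins, each containing at most $k'$ balls. In each round, first Player I removes a bin of largest size (number of balls) among the remaining bins, and then Player II adds balls to the remaining bins, at most $b$ balls in total in that round, distributed arbitrarily. Player II wins if at some moment some remaining bin contains $k$ balls; Player I wins if all bins are removed before this happens. If $b<\frac{k-k'}{\ln N+1}$, then Player I wins against every strategy of Player II. *)

theory Defs
  imports Complex_Main
begin

text \<open>A play of the bins game, as a sequence of positions indexed by rounds t = 0..N.
  S t is the set of remaining bins (bins are 0..N-1) before round t+1,
  L t i is the number of balls in bin i at that time.\<close>

definition bins_round ::
  "nat \<Rightarrow> nat set \<Rightarrow> (nat \<Rightarrow> nat) \<Rightarrow> nat set \<Rightarrow> (nat \<Rightarrow> nat) \<Rightarrow> bool" where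
  "bins_round b S L S' L' \<longleftrightarrow>
     (\<exists>r \<in> S. (\<forall>j \<in> S. L j \<le> L r) \<and> S' = S - {r}
        \<and> (\<forall>i \<in> S'. L i \<le> L' i)
        \<and> (\<Sum>i\<in>S'. (L' i - L i)) \<le> b)"

definition bins_play ::
  "nat \<Rightarrow> nat \<Rightarrow> nat \<Rightarrow> (nat \<Rightarrow> nat set) \<Rightarrow> (nat \<Rightarrow> nat \<Rightarrow> nat) \<Rightarrow> bool" where
  "bins_play N k' b S L \<longleftrightarrow>
     S 0 = {..<N} \<and> (\<forall>i \<in> S 0. L 0 i \<le> k')
     \<and> (\<forall>t < N. bins_round b (S t) (L t) (S (Suc t)) (L (Suc t)))"

end

theory Submission
  imports Defs "HOL-Analysis.Harmonic_Numbers"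
begin

text \<open>Fix a bin that survives until round s+d. Going back one round at a time, the bin removed
  in that round was at least as full as every bin of the current witness set, so adding it to
  the set does not decrease the average load, while undoing the round lowers the average of a
  set of size m by at most b/m. Hence the final load is at most the average initial load of
  some d+1 bins plus b\<cdot>H(d), and H(d) \<le> H(N) \<le> ln N + 1.\<close>

lemma harm_le_ln_plus_1:
  assumes "n > 0"
  shows "harm n \<le> ln (real n) + (1::real)"
proof -
  obtain m where m: "n = Suc m" using assms by (cases n) auto
  have "harm (Suc m) - ln (real (Suc m)) \<le> harm (Suc 0) - ln (real (Suc 0))"
    using decseq_harm_diff_ln[unfolded decseq_def, rule_format, of 0 m] by simp
  then show ?thesis using m by (simp add: harm_Suc harm_def)
qed

lemma mean_le_mean_insert_upper_bound:
  fixes f :: "'a \<Rightarrow> real"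
  assumes "finite W" "W \<noteq> {}" "r \<notin> W" "\<forall>j\<in>W. f j \<le> f r"
  shows "sum f W / card W \<le> sum f (insert r W) / card (insert r W)"
proof -
  have "sum f W \<le> card W * f r"
    using sum_bounded_above[of W f "f r"] assms(4) by simp
  moreover have "card W > 0" using assms(1,2) by (simp add: card_gt_0_iff)
  ultimately show ?thesis using assms(1,3) by (simp add: field_simps)
qed

lemma bins_round_sum_le:
  assumes round: "bins_round b S L S' L'" and "finite S'" "W \<subseteq> S'"
  shows "(\<Sum>j\<in>W. L' j) \<le> (\<Sum>j\<in>W. L j) + b"
proof -
  from round have grow: "\<forall>j\<in>S'. L j \<le> L' j" and added: "(\<Sum>j\<in>S'. L' j - L j) \<le> b"
    by (auto simp: bins_round_def)
  have "(\<Sum>j\<in>W. L' j) = (\<Sum>j\<in>W. L j) + (\<Sum>j\<in>W. L' j - L j)"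
    using grow \<open>W \<subseteq> S'\<close> by (simp add: sum.distrib[symmetric] subset_iff)
  also have "(\<Sum>j\<in>W. L' j - L j) \<le> (\<Sum>j\<in>S'. L' j - L j)"
    by (rule sum_mono2) (use assms(2,3) in auto)
  finally show ?thesis using added by linarith
qed

lemma bins_round_mean_step:
  assumes round: "bins_round b S L S' L'" and "finite S" "W \<subseteq> S'" "W \<noteq> {}"
  shows "\<exists>r \<in> S - W. (\<Sum>j\<in>W. real (L' j)) / card W
           \<le> (\<Sum>j\<in>insert r W. real (L j)) / card (insert r W) + b / card W"
proof -
  from round obtain r where r: "r \<in> S" "\<forall>j\<in>S. L j \<le> L r" "S' = S - {r}"
    by (auto simp: bins_round_def)
  have "finite S'" "finite W" using assms(2,3) r(3) finite_subset by auto
  have rW: "r \<notin> W" using assms(3) r(3) by auto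
  have "real (\<Sum>j\<in>W. L' j) \<le> real ((\<Sum>j\<in>W. L j) + b)"
    using bins_round_sum_le[OF round \<open>finite S'\<close> assms(3)] by (simp only: of_nat_le_iff)
  then have "(\<Sum>j\<in>W. real (L' j)) / card W \<le> ((\<Sum>j\<in>W. real (L j)) + b) / card W"
    by (intro divide_right_mono) auto
  moreover have "(\<Sum>j\<in>W. real (L j)) / card W
      \<le> (\<Sum>j\<in>insert r W. real (L j)) / card (insert r W)"
    using mean_le_mean_insert_upper_bound[where f = "\<lambda>j. real (L j)"] \<open>finite W\<close> assms(3,4) r rW
    by (auto simp: subset_iff)
  ultimately have "(\<Sum>j\<in>W. real (L' j)) / card W
      \<le> (\<Sum>j\<in>insert r W. real (L j)) / card (insert r W) + b / card W"
    by (simp add: add_divide_distrib)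
  then show ?thesis using r(1) rW by blast
qed

lemma bins_play_round:
  "bins_play N k' b S L \<Longrightarrow> t < N \<Longrightarrow> bins_round b (S t) (L t) (S (Suc t)) (L (Suc t))"
  by (simp add: bins_play_def)

lemma bins_play_finite:
  assumes play: "bins_play N k' b S L"
  shows "t \<le> N \<Longrightarrow> finite (S t)"
proof (induction t)
  case 0
  then show ?case using play by (simp add: bins_play_def)
next
  case (Suc t)
  then have "bins_round b (S t) (L t) (S (Suc t)) (L (Suc t))"
    using bins_play_round[OF play] by simp
  then obtain r where "S (Suc t) = S t - {r}" by (auto simp: bins_round_def)
  with Suc show ?case by simp
qed

lemma bins_play_load_le_mean_plus_harm:
  assumes play: "bins_play N k' b S L"
  shows "s + d \<le> N \<Longrightarrow> i \<in> S (s + d) \<Longrightarrow> \<exists>W \<subseteq> S s. card W = Suc d \<and>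
           real (L (s + d) i) \<le> (\<Sum>j\<in>W. real (L s j)) / Suc d + b * harm d"
proof (induction d arbitrary: s)
  case 0
  then show ?case by (intro exI[of _ "{i}"]) (auto simp: harm_def)
next
  case (Suc d)
  have "Suc s + d \<le> N" "i \<in> S (Suc s + d)" using Suc.prems by simp_all
  from Suc.IH[OF this] obtain W where W: "W \<subseteq> S (Suc s)" "card W = Suc d"
    and IH: "real (L (Suc s + d) i) \<le> (\<Sum>j\<in>W. real (L (Suc s) j)) / Suc d + b * harm d"
    by blast
  have "s < N" using Suc.prems by simp
  note round = bins_play_round[OF play this]
  have "W \<noteq> {}" using W(2) by auto
  from bins_round_mean_step[OF round bins_play_finite[OF play] W(1) this] \<open>s < N\<close>
  obtain r where r: "r \<in> S s - W" and step: "(\<Sum>j\<in>W. real (L (Suc s) j)) / card W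
      \<le> (\<Sum>j\<in>insert r W. real (L s j)) / card (insert r W) + b / card W"
    by auto
  have card: "card (insert r W) = Suc (Suc d)"
    using W(2) r by (simp add: card_insert_if card_ge_0_finite)
  have "b / Suc d + b * harm d = b * harm (Suc d)"
    by (simp add: harm_Suc divide_inverse distrib_left)
  then have "real (L (s + Suc d) i)
      \<le> (\<Sum>j\<in>insert r W. real (L s j)) / Suc (Suc d) + b * harm (Suc d)"
    using IH[unfolded add_Suc_shift] step[unfolded card W(2)] by linarith
  moreover have "insert r W \<subseteq> S s"
    using W(1) r round by (auto simp: bins_round_def)
  ultimately show ?case using card by blast
qed

theorem mainTheorem6:
  fixes N b k k' :: nat and S :: "nat \<Rightarrow> nat set" and L :: "nat \<Rightarrow> nat \<Rightarrow> nat"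
  assumes "N \<ge> 1" and "b \<ge> 1" and "k > k'"
    and "real b < (real k - real k') / (ln (real N) + 1)"
    and "bins_play N k' b S L"
  shows "\<forall>t \<le> N. \<forall>i \<in> S t. L t i < k"
proof (intro allI impI ballI)
  fix t i assume "t \<le> N" "i \<in> S t"
  then obtain W where W: "W \<subseteq> S 0" "card W = Suc t"
    and load: "real (L t i) \<le> (\<Sum>j\<in>W. real (L 0 j)) / Suc t + b * harm t"
    using bins_play_load_le_mean_plus_harm[OF assms(5), of 0 t] by auto
  have initial: "\<forall>j \<in> S 0. L 0 j \<le> k'" using assms(5) by (simp add: bins_play_def)
  have "(\<Sum>j\<in>W. real (L 0 j)) \<le> card W * real k'"
    using sum_bounded_above[of W "\<lambda>j. real (L 0 j)" "real k'"] W(1) initial by auto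
  then have mean: "(\<Sum>j\<in>W. real (L 0 j)) / Suc t \<le> k'"
    using W(2) by (simp add: field_simps)
  have "harm t \<le> (harm N :: real)" using \<open>t \<le> N\<close> by (rule harm_mono)
  also have "\<dots> \<le> ln (real N) + 1" using assms(1) by (intro harm_le_ln_plus_1) simp
  finally have "b * harm t \<le> b * (ln (real N) + 1)" by (rule mult_left_mono) simp
  also have "\<dots> < real k - real k'"
  proof -
    have "ln (real N) \<ge> 0" using assms(1) by (intro ln_ge_zero) simp
    then have "ln (real N) + 1 > 0" by simp
    then show ?thesis using assms(4) by (simp add: pos_less_divide_eq)
  qed
  finally have "b * harm t < real k - real k'" .
  then show "L t i < k" using load mean by linarith
qed

end
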